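(* Let $\mathfrak a$ be an abelian ideal of $\mathfrak b$ and suppose $\gamma_1,\gamma_2\in\Delta_{\mathfrak a}$ are strongly orthogonal. (i) If $\gamma_1+\delta\in\Delta^+$ for some $\delta\in\Delta^+$, then $\gamma_2+\delta\notin\Delta^+$. (ii) If $\gamma_1-\delta\in\Delta_{\mathfrak a}$ for some $\delta\in\Delta^+$, then $\gamma_2-\delta\notin\Delta_{\mathfrak a}$.
   Context: Let $G$ be a connected simple algebraic group over an algebraically closed field of characteristic zero, $B$ a Borel subgroup, $T\subset B$ a maximal torus, $\mathfrak b=\mathrm{Lie}(B)$, $\Delta$ the root system of $(G,T)$, $\Delta^+$ the positive roots determined by $B$. An abelian ideal of $\mathfrak b$ is a subspace $\mathfrak a\subset\mathfrak b$ with $[\mathfrak b,\mathfrak a]\subset\mathfrak a$, $[\mathfrak a,\mathfrak a]=0$; it is the sum of the root spaces for the roots in a subset $\Delta_{\mathfrak a}\subset\Delta^+$. Two distinct roots $\gamma_1,\gamma_2$ are strongly orthogonal if neither $\gamma_1+\gamma_2$ nor $\gamma_1-\gamma_2$ is a root. *)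

theory Defs
  imports "HOL-Analysis.Analysis"
begin

definition root_system :: "'a::euclidean_space set \<Rightarrow> bool" where
  "root_system R \<longleftrightarrow> finite R \<and> 0 \<notin> R \<and> span R = UNIV \<and>
     (\<forall>\<alpha>\<in>R. \<forall>\<beta>\<in>R. \<beta> - (2 * (\<beta> \<bullet> \<alpha>) / (\<alpha> \<bullet> \<alpha>)) *\<^sub>R \<alpha> \<in> R
                   \<and> 2 * (\<beta> \<bullet> \<alpha>) / (\<alpha> \<bullet> \<alpha>) \<in> \<int>) \<and>
     (\<forall>\<alpha>\<in>R. \<forall>c::real. c *\<^sub>R \<alpha> \<in> R \<longrightarrow> c = 1 \<or> c = -1)"

definition irreducible_root_system :: "'a::euclidean_space set \<Rightarrow> bool" where
  "irreducible_root_system R \<longleftrightarrow> root_system R \<and>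
     (\<forall>R1 R2. R1 \<union> R2 = R \<and> R1 \<inter> R2 = {} \<and> (\<forall>a\<in>R1. \<forall>b\<in>R2. a \<bullet> b = 0)
        \<longrightarrow> R1 = {} \<or> R2 = {})"

text \<open>Positive system: the roots positive on some regular vector (equivalently, determined by a Borel).\<close>
definition positive_system :: "'a::euclidean_space set \<Rightarrow> 'a set \<Rightarrow> bool" where
  "positive_system R P \<longleftrightarrow> (\<exists>v. (\<forall>\<alpha>\<in>R. v \<bullet> \<alpha> \<noteq> 0) \<and> P = {\<alpha>\<in>R. v \<bullet> \<alpha> > 0})"

text \<open>The set of roots \<Delta>_a of an abelian ideal a of b: a sum of positive root spaces,
  stable under ad of b (upward closed) and abelian.\<close>
definition abelian_ideal_roots :: "'a::euclidean_space set \<Rightarrow> 'a set \<Rightarrow> 'a set \<Rightarrow> bool" where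
  "abelian_ideal_roots R P A \<longleftrightarrow> A \<subseteq> P \<and>
     (\<forall>\<alpha>\<in>A. \<forall>\<beta>\<in>P. \<alpha> + \<beta> \<in> R \<longrightarrow> \<alpha> + \<beta> \<in> A) \<and>
     (\<forall>\<alpha>\<in>A. \<forall>\<beta>\<in>A. \<alpha> + \<beta> \<notin> R)"

definition strongly_orthogonal :: "'a::euclidean_space set \<Rightarrow> 'a \<Rightarrow> 'a \<Rightarrow> bool" where
  "strongly_orthogonal R \<gamma>1 \<gamma>2 \<longleftrightarrow> \<gamma>1 \<noteq> \<gamma>2 \<and> \<gamma>1 + \<gamma>2 \<notin> R \<and> \<gamma>1 - \<gamma>2 \<notin> R"

end

theory Submission
  imports Defs
begin

text \<open>Two roots of \<open>\<Delta>\<^sub>\<frak>a\<close> never form an obtuse angle, since their sum would be a root.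
  Strong orthogonality of \<open>\<gamma>\<^sub>1, \<gamma>\<^sub>2\<close> forces \<open>\<gamma>\<^sub>1 \<bullet> \<gamma>\<^sub>2 = 0\<close>. If \<open>\<gamma>\<^sub>1 + \<epsilon>\<close> and \<open>\<gamma>\<^sub>2 + \<epsilon>\<close>
  both lie in \<open>\<Delta>\<^sub>\<frak>a\<close> for some \<open>\<epsilon> \<noteq> 0\<close> (with \<open>\<epsilon> = \<delta>\<close> in (i), \<open>\<epsilon> = -\<delta>\<close> in (ii)), then
  \<open>\<epsilon> \<bullet> \<gamma>\<^sub>2 = (\<gamma>\<^sub>1 + \<epsilon>) \<bullet> \<gamma>\<^sub>2 \<ge> 0\<close> and likewise \<open>\<epsilon> \<bullet> \<gamma>\<^sub>1 \<ge> 0\<close>, so the two translates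
  form an acute angle; hence their difference \<open>\<gamma>\<^sub>1 - \<gamma>\<^sub>2\<close> would be a root.\<close>

lemma root_system_uminus_mem:
  assumes "root_system R" "\<beta> \<in> R"
  shows "- \<beta> \<in> R"
proof -
  have "\<beta> \<bullet> \<beta> \<noteq> 0" using assms unfolding root_system_def by auto
  hence "\<beta> - (2 * (\<beta> \<bullet> \<beta>) / (\<beta> \<bullet> \<beta>)) *\<^sub>R \<beta> = - \<beta>" by (simp add: scaleR_2)
  moreover have "\<beta> - (2 * (\<beta> \<bullet> \<beta>) / (\<beta> \<bullet> \<beta>)) *\<^sub>R \<beta> \<in> R"
    using assms unfolding root_system_def by blast
  ultimately show ?thesis by simp
qed

lemma root_system_inner_less:
  assumes rs: "root_system R" and "\<alpha> \<in> R" "\<beta> \<in> R" "\<alpha> \<bullet> \<beta> > 0" "\<alpha> \<noteq> \<beta>"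
  shows "(\<alpha> \<bullet> \<beta>) * (\<alpha> \<bullet> \<beta>) < (\<alpha> \<bullet> \<alpha>) * (\<beta> \<bullet> \<beta>)"
proof -
  have bb: "\<beta> \<bullet> \<beta> > 0" using assms unfolding root_system_def by auto
  define c where "c = (\<alpha> \<bullet> \<beta>) / (\<beta> \<bullet> \<beta>)"
  have "\<alpha> - c *\<^sub>R \<beta> \<noteq> 0"
  proof
    assume "\<alpha> - c *\<^sub>R \<beta> = 0"
    hence "c *\<^sub>R \<beta> \<in> R" "\<alpha> = c *\<^sub>R \<beta>" using assms by auto
    moreover have "c > 0" using assms bb by (simp add: c_def)
    ultimately show False using rs \<open>\<beta> \<in> R\<close> \<open>\<alpha> \<noteq> \<beta>\<close> unfolding root_system_def by force
  qed
  hence "0 < (\<alpha> - c *\<^sub>R \<beta>) \<bullet> (\<alpha> - c *\<^sub>R \<beta>)" by simp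
  also have "\<dots> = \<alpha> \<bullet> \<alpha> - (\<alpha> \<bullet> \<beta>) * (\<alpha> \<bullet> \<beta>) / (\<beta> \<bullet> \<beta>)"
    using bb by (simp add: c_def algebra_simps inner_commute power2_eq_square field_simps)
  finally show ?thesis using bb by (simp add: field_simps)
qed

lemma pos_int_mult_less_4:
  fixes i j :: int
  assumes "i > 0" "j > 0" "i * j < 4"
  shows "i = 1 \<or> j = 1"
proof (rule ccontr)
  assume "\<not> (i = 1 \<or> j = 1)"
  hence "2 * 2 \<le> i * j" using assms by (intro mult_mono) auto
  thus False using assms by simp
qed

text \<open>Both Cartan integers of \<open>\<alpha>, \<beta>\<close> are positive with product below 4, so one of them
  is 1 and the corresponding reflection maps one root to \<open>\<pm>(\<alpha> - \<beta>)\<close>.\<close>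
lemma root_system_diff_mem:
  assumes rs: "root_system R" and \<alpha>: "\<alpha> \<in> R" and \<beta>: "\<beta> \<in> R"
    and pos: "\<alpha> \<bullet> \<beta> > 0" and ne: "\<alpha> \<noteq> \<beta>"
  shows "\<alpha> - \<beta> \<in> R"
proof -
  have aa: "\<alpha> \<bullet> \<alpha> > 0" and bb: "\<beta> \<bullet> \<beta> > 0"
    using rs \<alpha> \<beta> unfolding root_system_def by auto
  define n where "n = 2 * (\<alpha> \<bullet> \<beta>) / (\<beta> \<bullet> \<beta>)"
  define m where "m = 2 * (\<beta> \<bullet> \<alpha>) / (\<alpha> \<bullet> \<alpha>)"
  obtain i j :: int where i: "n = of_int i" and j: "m = of_int j"
    using rs \<alpha> \<beta> unfolding root_system_def n_def m_def by (meson Ints_cases)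
  have "n * m = 4 * ((\<alpha> \<bullet> \<beta>) * (\<alpha> \<bullet> \<beta>)) / ((\<alpha> \<bullet> \<alpha>) * (\<beta> \<bullet> \<beta>))"
    by (simp add: n_def m_def inner_commute field_simps)
  also have "\<dots> < 4"
    using root_system_inner_less[OF assms] aa bb by (simp add: field_simps)
  finally have "i * j < 4" using i j by (metis of_int_less_iff of_int_mult of_int_numeral)
  moreover have "n > 0" "m > 0" using pos aa bb by (simp_all add: n_def m_def inner_commute)
  hence "i > 0" "j > 0" using i j by simp_all
  ultimately consider "n = 1" | "m = 1" using pos_int_mult_less_4 i j by force
  thus ?thesis
  proof cases
    case 1
    moreover have "\<alpha> - n *\<^sub>R \<beta> \<in> R" using rs \<alpha> \<beta> unfolding root_system_def n_def by blast
    ultimately show ?thesis by simp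
  next
    case 2
    moreover have "\<beta> - m *\<^sub>R \<alpha> \<in> R" using rs \<alpha> \<beta> unfolding root_system_def m_def by blast
    ultimately show ?thesis using root_system_uminus_mem[OF rs, of "\<beta> - \<alpha>"] by simp
  qed
qed

lemma root_system_add_mem:
  assumes rs: "root_system R" and "\<alpha> \<in> R" "\<beta> \<in> R" "\<alpha> \<bullet> \<beta> < 0" "\<alpha> \<noteq> - \<beta>"
  shows "\<alpha> + \<beta> \<in> R"
  using root_system_diff_mem[OF rs \<open>\<alpha> \<in> R\<close> root_system_uminus_mem[OF rs \<open>\<beta> \<in> R\<close>]] assms
  by simp

lemma positive_system_subset:
  "positive_system R P \<Longrightarrow> P \<subseteq> R"
  unfolding positive_system_def by auto

lemma positive_system_uminus_notin:
  "positive_system R P \<Longrightarrow> \<alpha> \<in> P \<Longrightarrow> - \<alpha> \<notin> P"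
  unfolding positive_system_def by auto

lemma strongly_orthogonal_positive_inner_eq_0:
  assumes "root_system R" "positive_system R P" "\<gamma>1 \<in> P" "\<gamma>2 \<in> P"
    and "strongly_orthogonal R \<gamma>1 \<gamma>2"
  shows "\<gamma>1 \<bullet> \<gamma>2 = 0"
  using root_system_add_mem[of R \<gamma>1 \<gamma>2] root_system_diff_mem[of R \<gamma>1 \<gamma>2]
    positive_system_subset[of R P] positive_system_uminus_notin[of R P \<gamma>2] assms
  unfolding strongly_orthogonal_def
  by (metis linorder_neqE_linordered_idom subsetD)

lemma abelian_ideal_roots_inner_nonneg:
  assumes "root_system R" "positive_system R P" "abelian_ideal_roots R P A"
    and "\<alpha> \<in> A" "\<beta> \<in> A"
  shows "\<alpha> \<bullet> \<beta> \<ge> 0"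
proof (rule ccontr)
  assume "\<not> \<alpha> \<bullet> \<beta> \<ge> 0"
  moreover have "\<alpha> \<in> P" "\<beta> \<in> P" using assms unfolding abelian_ideal_roots_def by auto
  ultimately have "\<alpha> + \<beta> \<in> R"
    using root_system_add_mem[OF assms(1)] positive_system_subset[OF assms(2)]
      positive_system_uminus_notin[OF assms(2)]
    by (metis minus_minus not_le subsetD)
  thus False using assms unfolding abelian_ideal_roots_def by blast
qed

lemma abelian_ideal_roots_no_common_translate:
  assumes rs: "root_system R" and ps: "positive_system R P" and ab: "abelian_ideal_roots R P A"
    and \<gamma>: "\<gamma>1 \<in> A" "\<gamma>2 \<in> A" and so: "strongly_orthogonal R \<gamma>1 \<gamma>2"
    and \<epsilon>: "\<epsilon> \<noteq> 0" and t: "\<gamma>1 + \<epsilon> \<in> A" "\<gamma>2 + \<epsilon> \<in> A"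
  shows False
proof -
  have AR: "A \<subseteq> R" using ab positive_system_subset[OF ps] unfolding abelian_ideal_roots_def by blast
  have orth: "\<gamma>1 \<bullet> \<gamma>2 = 0"
    using strongly_orthogonal_positive_inner_eq_0[OF rs ps _ _ so] \<gamma> ab
    unfolding abelian_ideal_roots_def by blast
  have "0 \<le> (\<gamma>1 + \<epsilon>) \<bullet> \<gamma>2" by (rule abelian_ideal_roots_inner_nonneg[OF rs ps ab t(1) \<gamma>(2)])
  hence e2: "0 \<le> \<epsilon> \<bullet> \<gamma>2" using orth by (simp add: inner_add_left)
  have "0 \<le> (\<gamma>2 + \<epsilon>) \<bullet> \<gamma>1" by (rule abelian_ideal_roots_inner_nonneg[OF rs ps ab t(2) \<gamma>(1)])
  hence e1: "0 \<le> \<epsilon> \<bullet> \<gamma>1" using orth by (simp add: inner_add_left inner_add_right inner_commute)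
  have "(\<gamma>1 + \<epsilon>) \<bullet> (\<gamma>2 + \<epsilon>) = \<gamma>1 \<bullet> \<gamma>2 + \<epsilon> \<bullet> \<gamma>1 + \<epsilon> \<bullet> \<gamma>2 + \<epsilon> \<bullet> \<epsilon>"
    by (simp add: algebra_simps inner_commute)
  moreover have "\<epsilon> \<bullet> \<epsilon> > 0" using \<epsilon> by simp
  ultimately have "(\<gamma>1 + \<epsilon>) \<bullet> (\<gamma>2 + \<epsilon>) > 0" using orth e1 e2 by linarith
  moreover have "\<gamma>1 + \<epsilon> \<noteq> \<gamma>2 + \<epsilon>" using so unfolding strongly_orthogonal_def by simp
  ultimately have "(\<gamma>1 + \<epsilon>) - (\<gamma>2 + \<epsilon>) \<in> R"
    using root_system_diff_mem[OF rs] t AR by blast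
  thus False using so unfolding strongly_orthogonal_def by simp
qed

theorem lemma1p3:
  fixes R P A :: "'a::euclidean_space set" and \<gamma>1 \<gamma>2 :: 'a
  assumes "irreducible_root_system R"
    and "positive_system R P"
    and "abelian_ideal_roots R P A"
    and "\<gamma>1 \<in> A" and "\<gamma>2 \<in> A"
    and "strongly_orthogonal R \<gamma>1 \<gamma>2"
  shows "(\<forall>\<delta>\<in>P. \<gamma>1 + \<delta> \<in> P \<longrightarrow> \<gamma>2 + \<delta> \<notin> P)
       \<and> (\<forall>\<delta>\<in>P. \<gamma>1 - \<delta> \<in> A \<longrightarrow> \<gamma>2 - \<delta> \<notin> A)"
proof -
  have rs: "root_system R" using assms(1) unfolding irreducible_root_system_def by blast
  note no_translate = abelian_ideal_roots_no_common_translate[OF rs assms(2-6)]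
  have nonzero: "\<delta> \<noteq> 0" if "\<delta> \<in> P" for \<delta>
    using that rs positive_system_subset[OF assms(2)] unfolding root_system_def by blast
  have up: "\<gamma> + \<delta> \<in> A" if "\<gamma> \<in> A" "\<delta> \<in> P" "\<gamma> + \<delta> \<in> P" for \<gamma> \<delta>
    using that assms(3) positive_system_subset[OF assms(2)] unfolding abelian_ideal_roots_def by blast
  show ?thesis
  proof (intro conjI ballI impI notI)
    fix \<delta> assume "\<delta> \<in> P" "\<gamma>1 + \<delta> \<in> P" "\<gamma>2 + \<delta> \<in> P"
    then show False using no_translate nonzero up assms(4,5) by blast
  next
    fix \<delta> assume "\<delta> \<in> P" "\<gamma>1 - \<delta> \<in> A" "\<gamma>2 - \<delta> \<in> A"
    then show False using no_translate[of "- \<delta>"] nonzero by simp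
  qed
qed

end
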